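(* Let $\{\varphi_n\},\{\psi_n\}$ be biorthogonal sequences in a Hilbert space $\mathcal H$ such that $D(\varphi)$ and $D(\psi)$ are dense in $\mathcal H$. Then: (1) $(\{\varphi_n\},\{\psi_n\})$ is a $(D(\varphi),\mathcal E)$-quasi basis for some dense subspace $\mathcal E$ with $D_\varphi\subseteq\mathcal E\subseteq D(\psi)$ if and only if $D_\varphi$ is dense in $\mathcal H$. In that case $(\{\varphi_n\},\{\psi_n\})$ is a $(D(\varphi),D_\varphi)$-quasi basis. (2) $(\{\varphi_n\},\{\psi_n\})$ is a $(\mathcal D,D(\psi))$-quasi basis for some dense subspace $\mathcal D$ with $D_\psi\subseteq\mathcal D\subseteq D(\varphi)$ if and only if $D_\psi$ is dense in $\mathcal H$. In that case $(\{\varphi_n\},\{\psi_n\})$ is a $(D_\psi,D(\psi))$-quasi basis.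
   Context: Inner product linear in the first argument. Biorthogonal: $\langle\varphi_n,\psi_m\rangle=\delta_{nm}$. $D_\varphi,D_\psi$ are the linear spans; $D(\varphi)=\{x:\sum_n|\langle x,\varphi_n\rangle|^2<\infty\}$, similarly $D(\psi)$. For dense subspaces $\mathcal D,\mathcal E$ with $D_\psi\subseteq\mathcal D\subseteq D(\varphi)$, $D_\varphi\subseteq\mathcal E\subseteq D(\psi)$, the pair is a $(\mathcal D,\mathcal E)$-quasi basis if $\sum_k\langle x,\varphi_k\rangle\langle\psi_k,y\rangle=\langle x,y\rangle$ for all $x\in\mathcal D$, $y\in\mathcal E$. *)

theory Defs
  imports "HOL-Analysis.Analysis"
begin

text \<open>Complex Hilbert spaces (not available in the distribution): a complete normed
space with a complex scalar multiplication and a complex inner product, linear in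
the first argument, inducing the norm.\<close>

class chilbert = real_normed_vector + complete_space +
  fixes scaleC :: "complex \<Rightarrow> 'a \<Rightarrow> 'a" (infixr "*\<^sub>C" 75)
    and cinner :: "'a \<Rightarrow> 'a \<Rightarrow> complex"
  assumes scaleC_add_right: "a *\<^sub>C (x + y) = a *\<^sub>C x + a *\<^sub>C y"
    and scaleC_add_left: "(a + b) *\<^sub>C x = a *\<^sub>C x + b *\<^sub>C x"
    and scaleC_scaleC: "a *\<^sub>C (b *\<^sub>C x) = (a * b) *\<^sub>C x"
    and scaleC_one: "1 *\<^sub>C x = x"
    and scaleR_scaleC: "scaleR r x = complex_of_real r *\<^sub>C x"
    and cinner_add_left: "cinner (x + y) z = cinner x z + cinner y z"
    and cinner_scaleC_left: "cinner (a *\<^sub>C x) y = a * cinner x y"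
    and cinner_commute: "cinner x y = cnj (cinner y x)"
    and cinner_self_nonneg: "0 \<le> Re (cinner x x)"
    and cinner_self_eq_zero: "cinner x x = 0 \<longleftrightarrow> x = 0"
    and norm_eq_sqrt_cinner: "norm x = sqrt (Re (cinner x x))"

instantiation complex :: chilbert
begin
definition scaleC_complex :: "complex \<Rightarrow> complex \<Rightarrow> complex" where "scaleC_complex a x = a * x"
definition cinner_complex :: "complex \<Rightarrow> complex \<Rightarrow> complex" where "cinner_complex x y = x * cnj y"
instance
  apply standard
  apply (auto simp: scaleC_complex_def cinner_complex_def algebra_simps scaleR_conv_of_real)
  apply (simp_all add: complex_mult_cnj cmod_def power2_eq_square)
  done
end

definition csubspace :: "'a::chilbert set \<Rightarrow> bool" where
  "csubspace S \<longleftrightarrow> 0 \<in> S \<and> (\<forall>x\<in>S. \<forall>y\<in>S. x + y \<in> S) \<and> (\<forall>c. \<forall>x\<in>S. c *\<^sub>C x \<in> S)"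

definition dense_in_H :: "'a::chilbert set \<Rightarrow> bool" where
  "dense_in_H S \<longleftrightarrow> closure S = UNIV"

definition biorthogonal :: "(nat \<Rightarrow> 'a::chilbert) \<Rightarrow> (nat \<Rightarrow> 'a) \<Rightarrow> bool" where
  "biorthogonal \<phi> \<psi> \<longleftrightarrow> (\<forall>n m. cinner (\<phi> n) (\<psi> m) = (if n = m then 1 else 0))"

definition lspan :: "(nat \<Rightarrow> 'a::chilbert) \<Rightarrow> 'a set" where
  "lspan \<phi> = {\<Sum>i\<in>F. c i *\<^sub>C \<phi> i | F c. finite F}"

definition Dom :: "(nat \<Rightarrow> 'a::chilbert) \<Rightarrow> 'a set" where
  "Dom \<phi> = {x. summable (\<lambda>n. (cmod (cinner x (\<phi> n)))\<^sup>2)}"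

definition quasi_basis :: "(nat \<Rightarrow> 'a::chilbert) \<Rightarrow> (nat \<Rightarrow> 'a) \<Rightarrow> 'a set \<Rightarrow> 'a set \<Rightarrow> bool" where
  "quasi_basis \<phi> \<psi> D E \<longleftrightarrow>
     csubspace D \<and> csubspace E \<and> dense_in_H D \<and> dense_in_H E \<and>
     lspan \<psi> \<subseteq> D \<and> D \<subseteq> Dom \<phi> \<and> lspan \<phi> \<subseteq> E \<and> E \<subseteq> Dom \<psi> \<and>
     (\<forall>x\<in>D. \<forall>y\<in>E. (\<lambda>k. cinner x (\<phi> k) * cinner (\<psi> k) y) sums cinner x y)"

end

(*
  If y is a finite combination of the phi_i, biorthogonality turns the coefficients
  <psi_k, y> into the conjugated coefficients of y, so the expansion of <x, y> is a finite
  sum and holds for every x; with D_phi dense this gives the (D(phi), D_phi)-quasi basis.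
  Conversely, if x is orthogonal to D_phi then all <x, phi_k> vanish, so x lies in D(phi)
  and the expansion gives <x, y> = 0 for all y in the dense set E, whence x = 0. A subspace
  with trivial orthogonal complement is dense by the projection theorem: the parallelogram
  law makes minimizing sequences Cauchy, so closed convex sets have nearest points.
  Conjugating the expansion exchanges the roles of (phi, D) and (psi, E), which reduces
  part (2) to part (1) for the pair (psi, phi).
*)

theory Submission
  imports Defs
begin

global_interpretation complex_vector: module "scaleC :: complex \<Rightarrow> 'a \<Rightarrow> 'a::chilbert"
  by standard (simp_all add: scaleC_add_right scaleC_add_left scaleC_scaleC scaleC_one)

lemma cinner_zero_left [simp]: "cinner 0 y = 0"
  using cinner_add_left [of 0 0 y] by simp

lemma cinner_zero_right [simp]: "cinner x 0 = 0"
  by (subst cinner_commute) simp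

lemma cinner_add_right: "cinner x (y + z) = cinner x y + cinner x z"
  by (subst (1 2 3) cinner_commute) (simp add: cinner_add_left)

lemma cinner_scaleC_right: "cinner x (a *\<^sub>C y) = cnj a * cinner x y"
  by (subst (1 2) cinner_commute) (simp add: cinner_scaleC_left)

lemma cinner_diff_left: "cinner (x - y) z = cinner x z - cinner y z"
  using cinner_add_left [of "x - y" y z] by simp

lemma cinner_diff_right: "cinner x (y - z) = cinner x y - cinner x z"
  using cinner_add_right [of x "y - z" z] by simp

lemma cinner_sum_left: "cinner (\<Sum>i\<in>F. f i) y = (\<Sum>i\<in>F. cinner (f i) y)"
  by (induction F rule: infinite_finite_induct) (simp_all add: cinner_add_left)

lemma cinner_sum_right: "cinner x (\<Sum>i\<in>F. f i) = (\<Sum>i\<in>F. cinner x (f i))"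
  by (induction F rule: infinite_finite_induct) (simp_all add: cinner_add_right)

lemma power2_norm_eq_cinner: "(norm x)\<^sup>2 = Re (cinner x x)"
  using norm_eq_sqrt_cinner [of x] cinner_self_nonneg [of x] by simp

lemma cinner_self: "cinner x x = complex_of_real ((norm x)\<^sup>2)"
proof -
  have "Im (cinner x x) = 0"
    using cinner_commute [of x x] by (simp add: complex_eq_iff)
  then show ?thesis
    by (simp add: complex_eq_iff power2_norm_eq_cinner)
qed

lemma norm_diff_sq: "(norm (x - y))\<^sup>2 = (norm x)\<^sup>2 + (norm y)\<^sup>2 - 2 * Re (cinner x y)"
proof -
  have "Re (cinner y x) = Re (cinner x y)"
    by (subst cinner_commute) simp
  then show ?thesis
    by (simp add: power2_norm_eq_cinner cinner_diff_left cinner_diff_right)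
qed

lemma norm_add_sq: "(norm (x + y))\<^sup>2 = (norm x)\<^sup>2 + (norm y)\<^sup>2 + 2 * Re (cinner x y)"
proof -
  have "Re (cinner y x) = Re (cinner x y)"
    by (subst cinner_commute) simp
  then show ?thesis
    by (simp add: power2_norm_eq_cinner cinner_add_left cinner_add_right)
qed

lemma parallelogram_law:
  fixes x y :: "'a::chilbert"
  shows "(norm (x + y))\<^sup>2 + (norm (x - y))\<^sup>2 = 2 * (norm x)\<^sup>2 + 2 * (norm y)\<^sup>2"
  by (simp add: norm_add_sq norm_diff_sq)

lemma power2_norm_scaleC: "(norm (c *\<^sub>C x))\<^sup>2 = (cmod c)\<^sup>2 * (norm x)\<^sup>2"
proof -
  have "cinner (c *\<^sub>C x) (c *\<^sub>C x) = (c * cnj c) * cinner x x"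
    by (simp add: cinner_scaleC_left cinner_scaleC_right)
  also have "\<dots> = complex_of_real ((cmod c)\<^sup>2 * (norm x)\<^sup>2)"
    by (simp only: cinner_self of_real_mult complex_norm_square)
  finally show ?thesis
    by (simp add: power2_norm_eq_cinner [of "c *\<^sub>C x"])
qed

lemma cinner_eq_0_if_norm_le_norm_diff_scaleC:
  assumes "\<And>c. norm x \<le> norm (x - c *\<^sub>C s)"
  shows "cinner x s = 0"
proof (cases "s = 0")
  case False
  define a where "a = cinner x s"
  define c where "c = a / complex_of_real ((norm s)\<^sup>2)"
  have "(norm x)\<^sup>2 \<le> (norm (x - c *\<^sub>C s))\<^sup>2"
    using assms [of c] by (simp add: power_mono)
  also have "\<dots> = (norm x)\<^sup>2 - (cmod a)\<^sup>2 / (norm s)\<^sup>2"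
  proof -
    have "cnj c * a = complex_of_real ((cmod a)\<^sup>2 / (norm s)\<^sup>2)"
      by (simp add: c_def mult.commute flip: of_real_power complex_norm_square)
    moreover have "(cmod c)\<^sup>2 * (norm s)\<^sup>2 = (cmod a)\<^sup>2 / (norm s)\<^sup>2"
      using False by (simp add: c_def norm_divide norm_mult power_divide power2_eq_square)
    ultimately show ?thesis
      by (simp add: norm_diff_sq power2_norm_scaleC cinner_scaleC_right a_def)
  qed
  finally have "(cmod a)\<^sup>2 / (norm s)\<^sup>2 \<le> 0"
    by simp
  with False show ?thesis
    by (simp add: a_def divide_le_0_iff)
qed simp

lemma Cauchy_if_dist_le_add:
  fixes s :: "nat \<Rightarrow> 'a::metric_space"
  assumes "\<And>m n. dist (s m) (s n) \<le> e m + e n" and "e \<longlonglongrightarrow> 0"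
  shows "Cauchy s"
proof (rule metric_CauchyI)
  fix \<epsilon> :: real
  assume "0 < \<epsilon>"
  then obtain N where N: "\<And>n. N \<le> n \<Longrightarrow> e n < \<epsilon> / 2"
    using order_tendstoD(2) [OF assms(2), of "\<epsilon> / 2"] by (auto simp: eventually_sequentially)
  have "dist (s m) (s n) < \<epsilon>" if "N \<le> m" and "N \<le> n" for m n
    using assms(1) [of m n] N [OF that(1)] N [OF that(2)] by linarith
  then show "\<exists>M. \<forall>m\<ge>M. \<forall>n\<ge>M. dist (s m) (s n) < \<epsilon>"
    by blast
qed

lemma dist_sq_le_infdist_convex:
  fixes S :: "'a::chilbert set"
  assumes "convex S" and "a \<in> S" and "b \<in> S"
  shows "(dist a b)\<^sup>2 \<le> 2 * (dist z a)\<^sup>2 + 2 * (dist z b)\<^sup>2 - 4 * (infdist z S)\<^sup>2"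
proof -
  have "(1/2) *\<^sub>R a + (1/2) *\<^sub>R b \<in> S"
    using assms by (intro convexD) auto
  then have "infdist z S \<le> dist z ((1/2) *\<^sub>R a + (1/2) *\<^sub>R b)"
    by (rule infdist_le)
  also have "\<dots> = norm ((z - a) + (z - b)) / 2"
  proof -
    have "(z - a) + (z - b) = 2 *\<^sub>R (z - ((1/2) *\<^sub>R a + (1/2) *\<^sub>R b))"
      by (simp add: algebra_simps scaleR_2)
    then show ?thesis
      by (simp add: dist_norm)
  qed
  finally have "4 * (infdist z S)\<^sup>2 \<le> (norm ((z - a) + (z - b)))\<^sup>2"
    using power_mono [of "2 * infdist z S" _ 2] infdist_nonneg [of z S]
    by (simp add: power_mult_distrib)
  moreover have "(dist a b)\<^sup>2 = 2 * (dist z a)\<^sup>2 + 2 * (dist z b)\<^sup>2 - (norm ((z - a) + (z - b)))\<^sup>2"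
    using parallelogram_law [of "z - a" "z - b"] by (simp add: dist_norm norm_minus_commute)
  ultimately show ?thesis
    by linarith
qed

lemma infdist_attains_inf_convex:
  fixes S :: "'a::chilbert set"
  assumes "closed S" and "convex S" and "S \<noteq> {}"
  obtains p where "p \<in> S" and "infdist z S = dist z p"
proof -
  define d where "d = infdist z S"
  define e :: "nat \<Rightarrow> real" where "e n = inverse (Suc n)" for n
  have "\<exists>s\<in>S. (dist z s)\<^sup>2 < d\<^sup>2 + e n" for n
  proof -
    have "(INF s\<in>S. dist z s) < sqrt (d\<^sup>2 + e n)"
      using infdist_notempty [OF assms(3)] by (simp add: d_def e_def real_less_rsqrt)
    then obtain s where "s \<in> S" and "dist z s < sqrt (d\<^sup>2 + e n)"
      using cINF_less_iff [OF assms(3) bdd_below_image_dist] by auto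
    then have "(dist z s)\<^sup>2 < (sqrt (d\<^sup>2 + e n))\<^sup>2"
      by (intro power_strict_mono) auto
    with \<open>s \<in> S\<close> show ?thesis
      by (auto simp: e_def)
  qed
  then obtain s where s_in: "\<And>n. s n \<in> S" and s_near: "\<And>n. (dist z (s n))\<^sup>2 < d\<^sup>2 + e n"
    by metis
  have "dist (s m) (s n) \<le> sqrt (2 * e m) + sqrt (2 * e n)" for m n
  proof -
    have "(dist (s m) (s n))\<^sup>2 \<le> 2 * e m + 2 * e n"
      using dist_sq_le_infdist_convex [OF assms(2) s_in s_in, of m n z] s_near [of m] s_near [of n]
      by (simp add: d_def)
    then have "dist (s m) (s n) \<le> sqrt (2 * e m + 2 * e n)"
      by (rule real_le_rsqrt)
    also have "\<dots> \<le> sqrt (2 * e m) + sqrt (2 * e n)"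
      by (rule sqrt_add_le_add_sqrt) (simp_all add: e_def)
    finally show ?thesis .
  qed
  moreover have "(\<lambda>n. sqrt (2 * e n)) \<longlonglongrightarrow> 0"
    using tendsto_real_sqrt [OF tendsto_mult_right_zero [OF LIMSEQ_inverse_real_of_nat, of 2]]
    by (simp add: e_def)
  ultimately have "Cauchy s"
    by (rule Cauchy_if_dist_le_add)
  then obtain p where "s \<longlonglongrightarrow> p"
    by (auto simp: Cauchy_convergent_iff convergent_def)
  with assms(1) s_in have "p \<in> S"
    by (rule closed_sequentially)
  have "(dist z p)\<^sup>2 \<le> d\<^sup>2"
  proof (rule LIMSEQ_le)
    show "(\<lambda>n. (dist z (s n))\<^sup>2) \<longlonglongrightarrow> (dist z p)\<^sup>2"
      by (intro tendsto_intros \<open>s \<longlonglongrightarrow> p\<close>)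
    show "(\<lambda>n. d\<^sup>2 + e n) \<longlonglongrightarrow> d\<^sup>2"
      using tendsto_add [OF tendsto_const LIMSEQ_inverse_real_of_nat] by (simp add: e_def)
    show "\<exists>N. \<forall>n\<ge>N. (dist z (s n))\<^sup>2 \<le> d\<^sup>2 + e n"
      using s_near less_imp_le by blast
  qed
  then have "dist z p \<le> d"
    using infdist_nonneg [of z S] by (simp add: d_def power2_le_iff_abs_le)
  moreover have "d \<le> dist z p"
    unfolding d_def using \<open>p \<in> S\<close> by (rule infdist_le)
  ultimately show thesis
    using \<open>p \<in> S\<close> that by (simp add: d_def)
qed

lemma convex_if_csubspace: "csubspace S \<Longrightarrow> convex S"
  unfolding csubspace_def convex_def by (simp add: scaleR_scaleC)

lemma dense_if_orthogonal_complement_trivial: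
  fixes S :: "'a::chilbert set"
  assumes "csubspace S" and "\<And>x. (\<forall>s\<in>S. cinner x s = 0) \<Longrightarrow> x = 0"
  shows "dense_in_H S"
proof -
  have "z \<in> closure S" for z
  proof -
    have "closure S \<noteq> {}"
      using assms(1) closure_subset by (fastforce simp: csubspace_def)
    then obtain p where p: "p \<in> closure S" "infdist z (closure S) = dist z p"
      using infdist_attains_inf_convex [of "closure S"] convex_if_csubspace [OF assms(1)] by auto
    have "cinner (z - p) s = 0" if "s \<in> S" for s
    proof (rule cinner_eq_0_if_norm_le_norm_diff_scaleC)
      fix c
      have "(+) (c *\<^sub>C s) ` S \<subseteq> S"
        using assms(1) \<open>s \<in> S\<close> by (auto simp: csubspace_def)
      then have "c *\<^sub>C s + p \<in> closure S"
        using closure_translation [of "c *\<^sub>C s" S] closure_mono p(1) by blast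
      then show "norm (z - p) \<le> norm (z - p - c *\<^sub>C s)"
        using infdist_le [of _ "closure S" z] p(2) by (simp add: dist_norm algebra_simps)
    qed
    then have "z - p = 0"
      using assms(2) by blast
    with p(1) show ?thesis
      by simp
  qed
  then show ?thesis
    unfolding dense_in_H_def by auto
qed

lemma eq_0_if_orthogonal_to_dense:
  fixes x :: "'a::chilbert"
  assumes "dense_in_H E" and "\<And>y. y \<in> E \<Longrightarrow> cinner x y = 0"
  shows "x = 0"
proof (rule ccontr)
  assume "x \<noteq> 0"
  moreover have "x \<in> closure E"
    using assms(1) by (simp add: dense_in_H_def)
  ultimately obtain y where "y \<in> E" and "dist y x < norm x"
    by (meson closure_approachable zero_less_norm_iff)
  moreover have "(norm x)\<^sup>2 \<le> (norm (x - y))\<^sup>2"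
    using norm_diff_sq [of x y] assms(2) [OF \<open>y \<in> E\<close>] by simp
  ultimately show False
    by (simp add: dist_norm norm_minus_commute power2_le_iff_abs_le)
qed

lemma cnj_cinner: "cnj (cinner x y) = cinner y x"
  by (simp add: cinner_commute [of y x])

lemma biorthogonal_sym: "biorthogonal \<phi> \<psi> \<Longrightarrow> biorthogonal \<psi> \<phi>"
  unfolding biorthogonal_def by (metis cnj_cinner complex_cnj_one complex_cnj_zero)

lemma sum_scaleC_in_lspan: "finite F \<Longrightarrow> (\<Sum>i\<in>F. c i *\<^sub>C \<phi> i) \<in> lspan \<phi>"
  unfolding lspan_def by blast

lemma lspan_base: "\<phi> k \<in> lspan \<phi>"
  using sum_scaleC_in_lspan [of "{k}" "\<lambda>_. 1" \<phi>] by (simp add: scaleC_one)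

lemma csubspace_lspan: "csubspace (lspan \<phi>)"
  unfolding csubspace_def
proof (intro conjI ballI allI)
  show "0 \<in> lspan \<phi>"
    using sum_scaleC_in_lspan [of "{}"] by simp
next
  fix x y
  assume "x \<in> lspan \<phi>" "y \<in> lspan \<phi>"
  then obtain F c G d where "finite F" and x: "x = (\<Sum>i\<in>F. c i *\<^sub>C \<phi> i)"
    and "finite G" and y: "y = (\<Sum>i\<in>G. d i *\<^sub>C \<phi> i)"
    unfolding lspan_def by blast
  have extend: "(\<Sum>i\<in>H. a i *\<^sub>C \<phi> i) = (\<Sum>i\<in>F \<union> G. (if i \<in> H then a i else 0) *\<^sub>C \<phi> i)"
    if "H \<subseteq> F \<union> G" for H a
    using that \<open>finite F\<close> \<open>finite G\<close> by (intro sum.mono_neutral_cong_left) auto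
  have "x + y = (\<Sum>i\<in>F \<union> G. (if i \<in> F then c i else 0) *\<^sub>C \<phi> i)
      + (\<Sum>i\<in>F \<union> G. (if i \<in> G then d i else 0) *\<^sub>C \<phi> i)"
    unfolding x y by (intro arg_cong2 [where f = "(+)"] extend) auto
  also have "\<dots> = (\<Sum>i\<in>F \<union> G.
      ((if i \<in> F then c i else 0) + (if i \<in> G then d i else 0)) *\<^sub>C \<phi> i)"
    by (simp only: scaleC_add_left sum.distrib)
  finally show "x + y \<in> lspan \<phi>"
    using \<open>finite F\<close> \<open>finite G\<close> by (simp add: sum_scaleC_in_lspan)
next
  fix a x
  assume "x \<in> lspan \<phi>"
  then obtain F c where "finite F" "x = (\<Sum>i\<in>F. c i *\<^sub>C \<phi> i)"
    unfolding lspan_def by blast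
  then have "a *\<^sub>C x = (\<Sum>i\<in>F. (a * c i) *\<^sub>C \<phi> i)"
    by (simp add: complex_vector.scale_sum_right scaleC_scaleC)
  then show "a *\<^sub>C x \<in> lspan \<phi>"
    using \<open>finite F\<close> by (simp add: sum_scaleC_in_lspan)
qed

lemma csubspace_Dom: "csubspace (Dom \<phi>)"
  unfolding csubspace_def Dom_def
proof (intro conjI ballI allI; clarsimp)
  fix x y
  assume x: "summable (\<lambda>n. (cmod (cinner x (\<phi> n)))\<^sup>2)"
    and y: "summable (\<lambda>n. (cmod (cinner y (\<phi> n)))\<^sup>2)"
  have bound: "(cmod (cinner (x + y) (\<phi> n)))\<^sup>2
      \<le> 2 * (cmod (cinner x (\<phi> n)))\<^sup>2 + 2 * (cmod (cinner y (\<phi> n)))\<^sup>2" for n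
  proof -
    have "cmod (cinner (x + y) (\<phi> n)) \<le> cmod (cinner x (\<phi> n)) + cmod (cinner y (\<phi> n))"
      by (simp add: cinner_add_left norm_triangle_ineq)
    then have "(cmod (cinner (x + y) (\<phi> n)))\<^sup>2
        \<le> (cmod (cinner x (\<phi> n)) + cmod (cinner y (\<phi> n)))\<^sup>2"
      by (simp add: power_mono)
    then show ?thesis
      using sum_squares_bound [of "cmod (cinner x (\<phi> n))" "cmod (cinner y (\<phi> n))"]
      by (simp add: power2_sum)
  qed
  show "summable (\<lambda>n. (cmod (cinner (x + y) (\<phi> n)))\<^sup>2)"
    by (rule summable_comparison_test' [OF summable_add [OF summable_mult [OF x, of 2] summable_mult [OF y, of 2]]])
      (simp add: bound)
next
  fix c x
  assume "summable (\<lambda>n. (cmod (cinner x (\<phi> n)))\<^sup>2)"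
  then show "summable (\<lambda>n. (cmod (cinner (c *\<^sub>C x) (\<phi> n)))\<^sup>2)"
    by (simp add: cinner_scaleC_left norm_mult power_mult_distrib summable_mult)
qed

lemma cinner_lincomb_biorthogonal:
  assumes "biorthogonal \<phi> \<psi>" and "finite F"
  shows "cinner (\<Sum>i\<in>F. c i *\<^sub>C \<phi> i) (\<psi> k) = (if k \<in> F then c k else 0)"
proof -
  have "cinner (\<phi> i) (\<psi> k) = (if i = k then 1 else 0)" for i
    using assms(1) by (simp add: biorthogonal_def)
  then show ?thesis
    using assms(2) by (simp add: cinner_sum_left cinner_scaleC_left if_distrib [of "(*) _"] cong: if_cong)
qed

lemma lspan_subset_Dom:
  assumes "biorthogonal \<phi> \<psi>"
  shows "lspan \<phi> \<subseteq> Dom \<psi>"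
proof
  fix y
  assume "y \<in> lspan \<phi>"
  then obtain F c where "finite F" "y = (\<Sum>i\<in>F. c i *\<^sub>C \<phi> i)"
    unfolding lspan_def by blast
  then show "y \<in> Dom \<psi>"
    unfolding Dom_def using assms
    by (intro CollectI summable_finite [OF \<open>finite F\<close>]) (simp add: cinner_lincomb_biorthogonal)
qed

lemma sums_cinner_lspan:
  assumes "biorthogonal \<phi> \<psi>" and "y \<in> lspan \<phi>"
  shows "(\<lambda>k. cinner x (\<phi> k) * cinner (\<psi> k) y) sums cinner x y"
proof -
  obtain F c where "finite F" and y: "y = (\<Sum>i\<in>F. c i *\<^sub>C \<phi> i)"
    using assms(2) unfolding lspan_def by blast
  have "cinner (\<psi> k) y = (if k \<in> F then cnj (c k) else 0)" for k
    using cinner_lincomb_biorthogonal [OF assms(1) \<open>finite F\<close>, of c k]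
    by (metis y cnj_cinner complex_cnj_zero)
  then have "(\<lambda>k. cinner x (\<phi> k) * cinner (\<psi> k) y) sums (\<Sum>k\<in>F. cnj (c k) * cinner x (\<phi> k))"
    using sums_finite [OF \<open>finite F\<close>, of "\<lambda>k. cinner x (\<phi> k) * cinner (\<psi> k) y"]
    by (simp add: mult.commute)
  also have "(\<Sum>k\<in>F. cnj (c k) * cinner x (\<phi> k)) = cinner x y"
    by (simp add: y cinner_sum_right cinner_scaleC_right)
  finally show ?thesis .
qed

lemma quasi_basis_swap: "quasi_basis \<phi> \<psi> D E \<longleftrightarrow> quasi_basis \<psi> \<phi> E D"
proof -
  have "(\<lambda>k. cinner x (\<phi> k) * cinner (\<psi> k) y) sums cinner x y
      \<longleftrightarrow> (\<lambda>k. cinner y (\<psi> k) * cinner (\<phi> k) x) sums cinner y x" for x y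
    by (subst sums_cnj [symmetric]) (simp add: cnj_cinner mult.commute)
  then show ?thesis
    unfolding quasi_basis_def by blast
qed

lemma quasi_basis_Dom_lspan:
  assumes "biorthogonal \<phi> \<psi>" and "dense_in_H (Dom \<phi>)" and "dense_in_H (lspan \<phi>)"
  shows "quasi_basis \<phi> \<psi> (Dom \<phi>) (lspan \<phi>)"
  unfolding quasi_basis_def
  using assms csubspace_Dom csubspace_lspan lspan_subset_Dom [OF assms(1)]
    lspan_subset_Dom [OF biorthogonal_sym [OF assms(1)]] sums_cinner_lspan [OF assms(1)]
  by blast

lemma dense_lspan_if_quasi_basis:
  assumes "quasi_basis \<phi> \<psi> (Dom \<phi>) E"
  shows "dense_in_H (lspan \<phi>)"
proof (rule dense_if_orthogonal_complement_trivial [OF csubspace_lspan])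
  fix x
  assume "\<forall>s\<in>lspan \<phi>. cinner x s = 0"
  then have coeffs: "cinner x (\<phi> k) = 0" for k
    using lspan_base by blast
  then have "x \<in> Dom \<phi>"
    by (simp add: Dom_def)
  then have "cinner x y = 0" if "y \<in> E" for y
    using assms that sums_unique2 [OF sums_zero] by (fastforce simp: quasi_basis_def coeffs)
  with assms show "x = 0"
    by (auto simp: quasi_basis_def intro: eq_0_if_orthogonal_to_dense)
qed

lemma quasi_basis_Dom_iff_dense_lspan:
  assumes "biorthogonal \<phi> \<psi>" and "dense_in_H (Dom \<phi>)"
  shows "(\<exists>E. quasi_basis \<phi> \<psi> (Dom \<phi>) E) \<longleftrightarrow> dense_in_H (lspan \<phi>)"
  using assms dense_lspan_if_quasi_basis quasi_basis_Dom_lspan by blast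

theorem proposition4p2:
  fixes \<phi> \<psi> :: "nat \<Rightarrow> 'a::chilbert"
  assumes "biorthogonal \<phi> \<psi>"
    and "dense_in_H (Dom \<phi>)"
    and "dense_in_H (Dom \<psi>)"
  shows "((\<exists>E. quasi_basis \<phi> \<psi> (Dom \<phi>) E) \<longleftrightarrow> dense_in_H (lspan \<phi>))
       \<and> (dense_in_H (lspan \<phi>) \<longrightarrow> quasi_basis \<phi> \<psi> (Dom \<phi>) (lspan \<phi>))
       \<and> ((\<exists>D. quasi_basis \<phi> \<psi> D (Dom \<psi>)) \<longleftrightarrow> dense_in_H (lspan \<psi>))
       \<and> (dense_in_H (lspan \<psi>) \<longrightarrow> quasi_basis \<phi> \<psi> (lspan \<psi>) (Dom \<psi>))"
proof -
  have "biorthogonal \<psi> \<phi>"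
    using assms(1) by (rule biorthogonal_sym)
  then have "((\<exists>D. quasi_basis \<phi> \<psi> D (Dom \<psi>)) \<longleftrightarrow> dense_in_H (lspan \<psi>))
      \<and> (dense_in_H (lspan \<psi>) \<longrightarrow> quasi_basis \<phi> \<psi> (lspan \<psi>) (Dom \<psi>))"
    using quasi_basis_Dom_iff_dense_lspan [of \<psi> \<phi>] quasi_basis_Dom_lspan [of \<psi> \<phi>] assms(3)
    by (simp add: quasi_basis_swap [of \<phi> \<psi>])
  moreover have "((\<exists>E. quasi_basis \<phi> \<psi> (Dom \<phi>) E) \<longleftrightarrow> dense_in_H (lspan \<phi>))
      \<and> (dense_in_H (lspan \<phi>) \<longrightarrow> quasi_basis \<phi> \<psi> (Dom \<phi>) (lspan \<phi>))"
    using quasi_basis_Dom_iff_dense_lspan [OF assms(1,2)] quasi_basis_Dom_lspan [OF assms(1,2)]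
    by blast
  ultimately show ?thesis
    by blast
qed

end
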